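(* Let $\eta>0$, $\alpha\in(0,1)$, and run the generalized share algorithm with the mixing rule $\hat p_{j,t}=(1-\alpha)v_{j,t}+\alpha\,w_{j,t}/Z_t$ for $t\ge2$, where $w_{j,t}=\max_{s\le t}v_{j,s}$ and $Z_t=\sum_{i=1}^dw_{i,t}$. Then for all $T\ge1$, all loss vectors $\ell_1,\dots,\ell_T\in[0,1]^d$, and all $q_1,\dots,q_T\in\Delta_d$, \[ \sum_{t=1}^T\hat p_t^\top\ell_t-\sum_{t=1}^Tq_t^\top\ell_t\le\frac{n(q_1^T)\ln d}{\eta}+\frac\eta8T+\frac{m(q_1^T)}{\eta}\ln\frac T\alpha+\frac{T-m(q_1^T)-1}{\eta}\ln\frac1{1-\alpha}. \]
   Context: Let $d\ge1$ and $\Delta_d=\{q\in[0,1]^d:\sum_{i=1}^d q_i=1\}$. The generalized share algorithm with learning rate $\eta>0$ and mixing functions $\psi_t:[0,1]^{td}\to\Delta_d$ ($t\ge2$) works as follows: $\hat p_1=v_1=(1/d,\dots,1/d)$. At each round $t=1,2,\dots$ it predicts $\hat p_t=(\hat p_{1,t},\dots,\hat p_{d,t})\in\Delta_d$, observes a loss vector $\ell_t=(\ell_{1,t},\dots,\ell_{d,t})\in[0,1]^d$ (arbitrary), and suffers loss $\hat p_t^\top\ell_t$. It then forms the pre-weights $v_{j,t+1}=\hat p_{j,t}e^{-\eta\ell_{j,t}}/\sum_{i=1}^d\hat p_{i,t}e^{-\eta\ell_{i,t}}$ for $j=1,\dots,d$, sets $v_{t+1}=(v_{1,t+1},\dots,v_{d,t+1})$,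 and defines $\hat p_{t+1}=\psi_{t+1}(V_{t+1})$ where $V_{t+1}=[v_{i,s}]_{1\le i\le d,1\le s\le t+1}$ is the $d\times(t+1)$ matrix of all pre-weights so far. For $x,y\in\mathbb R_+^d$, $D_{\mathrm{TV}}(x,y)=\sum_{i:\,x_i\ge y_i}(x_i-y_i)$; for $u_1,\dots,u_T\in\mathbb R_+^d$ (with $u_t=(u_{1,t},\dots,u_{d,t})$), $m(u_1^T)=\sum_{t=2}^T D_{\mathrm{TV}}(u_t,u_{t-1})$ and $n(u_1^T)=\sum_{i=1}^d\max_{1\le t\le T}u_{i,t}$. *)

theory Defs
  imports "HOL-Analysis.Analysis"
begin

(* Experts are indexed by j \<in> {0..<d}; rounds by t \<ge> 1.
   Loss vectors: l t j = \<ell>_{j,t}.  Pre-weight matrix: V s j = v_{j,s} (s \<ge> 1).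
   A mixing function psi t V gives \<hat>p_t from columns V 1, ..., V t. *)

primrec gs_state :: "nat \<Rightarrow> real \<Rightarrow> (nat \<Rightarrow> (nat \<Rightarrow> nat \<Rightarrow> real) \<Rightarrow> nat \<Rightarrow> real)
    \<Rightarrow> (nat \<Rightarrow> nat \<Rightarrow> real) \<Rightarrow> nat \<Rightarrow> (nat \<Rightarrow> nat \<Rightarrow> real) \<times> (nat \<Rightarrow> real)" where
  "gs_state d \<eta> psi l 0 = ((\<lambda>s j. 1 / real d), (\<lambda>j. 1 / real d))"
| "gs_state d \<eta> psi l (Suc k) =
     (let (V, p) = gs_state d \<eta> psi l k;
          t = Suc k;
          v' = (\<lambda>j. p j * exp (- \<eta> * l t j) / (\<Sum>i<d. p i * exp (- \<eta> * l t i)));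
          V' = V(Suc t := v')
      in (V', psi (Suc t) V'))"

text \<open>State after round k: (pre-weights v_1..v_{k+1}, prediction p_{k+1}).\<close>

definition gs_pred :: "nat \<Rightarrow> real \<Rightarrow> (nat \<Rightarrow> (nat \<Rightarrow> nat \<Rightarrow> real) \<Rightarrow> nat \<Rightarrow> real)
    \<Rightarrow> (nat \<Rightarrow> nat \<Rightarrow> real) \<Rightarrow> nat \<Rightarrow> nat \<Rightarrow> real" where
  "gs_pred d \<eta> psi l t = snd (gs_state d \<eta> psi l (t - 1))"

definition share_max_mix :: "nat \<Rightarrow> real \<Rightarrow> nat \<Rightarrow> (nat \<Rightarrow> nat \<Rightarrow> real) \<Rightarrow> nat \<Rightarrow> real" where
  "share_max_mix d \<alpha> t V j =
     (let w = (\<lambda>i. Max ((\<lambda>s. V s i) ` {1..t}));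
          Z = (\<Sum>i<d. w i)
      in (1 - \<alpha>) * V t j + \<alpha> * w j / Z)"

definition prob_simplex :: "nat \<Rightarrow> (nat \<Rightarrow> real) \<Rightarrow> bool" where
  "prob_simplex d q \<longleftrightarrow> (\<forall>i<d. 0 \<le> q i \<and> q i \<le> 1) \<and> (\<Sum>i<d. q i) = 1"

definition D_TV :: "nat \<Rightarrow> (nat \<Rightarrow> real) \<Rightarrow> (nat \<Rightarrow> real) \<Rightarrow> real" where
  "D_TV d x y = (\<Sum>i\<in>{i. i < d \<and> x i \<ge> y i}. x i - y i)"

definition m_shift :: "nat \<Rightarrow> nat \<Rightarrow> (nat \<Rightarrow> nat \<Rightarrow> real) \<Rightarrow> real" where
  "m_shift d T u = (\<Sum>t=2..T. D_TV d (u t) (u (t - 1)))"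

definition n_max :: "nat \<Rightarrow> nat \<Rightarrow> (nat \<Rightarrow> nat \<Rightarrow> real) \<Rightarrow> real" where
  "n_max d T u = (\<Sum>i<d. Max ((\<lambda>t. u t i) ` {1..T}))"

end

theory Submission
  imports Defs "HOL-Probability.Hoeffding"
begin

(* For any share algorithm, Hoeffding's lemma
   bounds the regret of round t against a comparator q_t by
     (1/eta) sum_j q_{j,t} (ln v_{j,t+1} - ln p_{j,t}) + eta/8.
   Summed over t, the logarithms are regrouped per expert j into pairs
   q_{j,t-1} ln v_{j,t} - q_{j,t} ln p_{j,t}; since p_t is a mixture of v_t (weight 1 - alpha) and
   of w_t / Z_t with Z_t <= t <= T, each pair costs ln(1/(1-alpha)) on the mass that q keeps, and
   ln(T/alpha) on the mass that q moves (the total variation), plus a term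
   (q_{j,t} - q_{j,t-1}) (- ln w_{j,t}).  Summation by parts turns the latter into
   sum_t q_{j,t} (ln w_{j,t+1} - ln w_{j,t}), which is at most max_t q_{j,t} ln d because the
   running maximum w_{j,t} increases from 1/d to at most 1. *)

lemma exp_le_chord:
  fixes h y :: real
  assumes "0 \<le> h" "0 \<le> y" "y \<le> 1"
  shows "exp (h * y) \<le> 1 + y * (exp h - 1)"
proof -
  have "exp (h * ((1 - y) * 0 + y * 1)) \<le> (1 - y) * exp (h * 0) + y * exp (h * 1)"
    using convex_onD[OF convex_on_exp[OF assms(1)], of y 0 1] assms by simp
  then show ?thesis by (simp add: algebra_simps)
qed

lemma ln_mixture_exp_le:
  fixes p x :: "'a \<Rightarrow> real" and h :: real
  assumes h: "0 \<le> h" and p_nonneg: "\<forall>i\<in>A. 0 \<le> p i" and p_sum: "(\<Sum>i\<in>A. p i) = 1"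
    and x_bounds: "\<forall>i\<in>A. 0 \<le> x i \<and> x i \<le> 1"
  shows "ln (\<Sum>i\<in>A. p i * exp (- h * x i)) \<le> - h * (\<Sum>i\<in>A. p i * x i) + h\<^sup>2 / 8"
proof -
  define \<mu> where "\<mu> = (\<Sum>i\<in>A. p i * (1 - x i))"
  have \<mu>_eq: "\<mu> = 1 - (\<Sum>i\<in>A. p i * x i)"
    unfolding \<mu>_def by (simp add: algebra_simps sum_subtractf p_sum)
  have \<mu>_nonneg: "0 \<le> \<mu>"
    unfolding \<mu>_def using p_nonneg x_bounds by (intro sum_nonneg) auto
  have upper: "(\<Sum>i\<in>A. p i * exp (- h * x i)) \<le> exp (- h) * (1 + \<mu> * (exp h - 1))"
  proof -
    have "(\<Sum>i\<in>A. p i * exp (- h * x i))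
        \<le> (\<Sum>i\<in>A. p i * (exp (- h) * (1 + (1 - x i) * (exp h - 1))))"
    proof (rule sum_mono)
      fix i assume "i \<in> A"
      then have i: "0 \<le> p i" "0 \<le> x i" "x i \<le> 1" using p_nonneg x_bounds by auto
      have "exp (- h * x i) = exp (- h) * exp (h * (1 - x i))"
        by (simp add: exp_add[symmetric] algebra_simps)
      also have "\<dots> \<le> exp (- h) * (1 + (1 - x i) * (exp h - 1))"
        using exp_le_chord[OF h, of "1 - x i"] i by simp
      finally show "p i * exp (- h * x i) \<le> p i * (exp (- h) * (1 + (1 - x i) * (exp h - 1)))"
        using i(1) by (rule mult_left_mono)
    qed
    also have "\<dots> = (\<Sum>i\<in>A. exp (- h) * p i + exp (- h) * (exp h - 1) * (p i * (1 - x i)))"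
      by (intro sum.cong) (auto simp: algebra_simps)
    also have "\<dots> = exp (- h) * (1 + \<mu> * (exp h - 1))"
      unfolding \<mu>_def sum.distrib sum_distrib_left[symmetric] p_sum by (simp add: algebra_simps)
    finally show ?thesis .
  qed
  have lower: "exp (- h) \<le> (\<Sum>i\<in>A. p i * exp (- h * x i))"
  proof -
    have "exp (- h) = (\<Sum>i\<in>A. p i * exp (- h))"
      by (simp add: sum_distrib_right[symmetric] p_sum)
    also have "\<dots> \<le> (\<Sum>i\<in>A. p i * exp (- h * x i))"
      using p_nonneg x_bounds h by (intro sum_mono mult_left_mono) (auto simp: mult_left_le)
    finally show ?thesis .
  qed
  have "ln (\<Sum>i\<in>A. p i * exp (- h * x i)) \<le> ln (exp (- h) * (1 + \<mu> * (exp h - 1)))"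
    using upper lower by (intro ln_mono) (auto intro: less_le_trans[OF exp_gt_zero])
  also have "\<dots> = - h + ln (1 + \<mu> * (exp h - 1))"
  proof -
    have "0 \<le> \<mu> * (exp h - 1)" using \<mu>_nonneg h by simp
    then show ?thesis by (simp add: ln_mult)
  qed
  also have "\<dots> \<le> - h + (h * \<mu> + h\<^sup>2 / 8)"
    using Hoeffdings_lemma_aux[OF h \<mu>_nonneg] by simp
  finally show ?thesis unfolding \<mu>_eq by (simp add: algebra_simps)
qed

lemma D_TV_eq_sum_pos_part: "D_TV d x y = (\<Sum>i<d. max (x i - y i) 0)"
proof -
  have "D_TV d x y = (\<Sum>i\<in>{i\<in>{..<d}. y i \<le> x i}. x i - y i)"
    unfolding D_TV_def by (rule sum.cong) auto
  also have "\<dots> = (\<Sum>i<d. if y i \<le> x i then x i - y i else 0)"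
    by (rule sum.inter_filter) simp
  also have "\<dots> = (\<Sum>i<d. max (x i - y i) 0)"
    by (intro sum.cong) auto
  finally show ?thesis .
qed

lemma sum_shifted_diff:
  fixes a b :: "nat \<Rightarrow> 'a::ab_group_add"
  assumes "1 \<le> n"
  shows "(\<Sum>t=1..n. a (Suc t) - b t) = (\<Sum>t=2..n. a t - b t) + a (Suc n) - b 1"
  using assms
proof (induction n rule: dec_induct)
  case base
  then show ?case by simp
next
  case (step n)
  then show ?case by (simp add: sum.cl_ivl_Suc algebra_simps)
qed

lemma sum_by_parts:
  fixes f g :: "nat \<Rightarrow> 'a::comm_ring"
  assumes "1 \<le> n"
  shows "(\<Sum>t=1..n. f t * (g t - g (Suc t)))
       = f 1 * g 1 + (\<Sum>t=2..n. (f t - f (t - 1)) * g t) - f n * g (Suc n)"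
  using assms
proof (induction n rule: dec_induct)
  case base
  then show ?case by (simp add: algebra_simps)
next
  case (step n)
  then show ?case by (simp add: sum.cl_ivl_Suc algebra_simps)
qed

lemma weighted_telescope_le:
  fixes f g :: "nat \<Rightarrow> real"
  assumes f_le: "\<forall>t\<in>{1..n}. f t \<le> M" and g_decr: "\<forall>t\<in>{1..n}. g (Suc t) \<le> g t"
  shows "(\<Sum>t=1..n. f t * (g t - g (Suc t))) \<le> M * (g 1 - g (Suc n))"
proof -
  have "(\<Sum>t=1..n. f t * (g t - g (Suc t))) \<le> (\<Sum>t=1..n. M * (g t - g (Suc t)))"
    using f_le g_decr by (intro sum_mono mult_right_mono) auto
  also have "\<dots> = M * - (\<Sum>t=1..n. g (Suc t) - g t)"
    by (simp add: sum_distrib_left[symmetric] sum_negf[symmetric])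
  also have "\<dots> = M * (g 1 - g (Suc n))"
    by (subst sum_Suc_diff) auto
  finally show ?thesis .
qed

text \<open>A weight b on ln(x + y) can be split
  as min a b on the first summand x and the excess b - a on the second summand y; a weight a on
  ln v exceeding b is dominated by the larger value w.\<close>

lemma ln_mixture_split:
  fixes a b x y v w :: real
  assumes "0 \<le> a" "0 \<le> b" "0 < x" "0 < y" "0 < v" "v \<le> w"
  shows "a * ln v - b * ln (x + y)
       \<le> min a b * ln (v / x) + max (b - a) 0 * ln (1 / y) + max (a - b) 0 * ln w"
proof (cases "a \<le> b")
  case True
  have "a * ln x \<le> a * ln (x + y)" and "(b - a) * ln y \<le> (b - a) * ln (x + y)"
    using assms True by (auto intro!: mult_left_mono)
  then show ?thesis
    using True assms by (simp add: ln_div algebra_simps)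
next
  case False
  have "b * ln x \<le> b * ln (x + y)" and "(a - b) * ln v \<le> (a - b) * ln w"
    using assms False by (auto intro!: mult_left_mono)
  then show ?thesis
    using False assms by (simp add: ln_div algebra_simps)
qed

section \<open>An abstract run of the generalized share algorithm\<close>

definition pos_simplex :: "nat \<Rightarrow> (nat \<Rightarrow> real) \<Rightarrow> bool" where
  "pos_simplex d x \<longleftrightarrow> (\<forall>j<d. 0 < x j) \<and> (\<Sum>j<d. x j) = 1"

lemma pos_simplex_le_one:
  assumes "pos_simplex d x" "j < d"
  shows "x j \<le> 1"
proof -
  have "x j \<le> (\<Sum>i<d. x i)"
    using assms unfolding pos_simplex_def by (intro member_le_sum) (auto simp: less_imp_le)
  then show ?thesis using assms(1) unfolding pos_simplex_def by simp
qed

locale share_run =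
  fixes d T :: nat and \<eta> :: real and l p v :: "nat \<Rightarrow> nat \<Rightarrow> real"
  assumes d_pos: "1 \<le> d" and T_pos: "1 \<le> T" and eta_pos: "0 < \<eta>"
    and loss_bounded: "\<forall>t\<in>{1..T}. \<forall>j<d. 0 \<le> l t j \<and> l t j \<le> 1"
    and v_init: "\<forall>j. v 1 j = 1 / real d" and p_init: "\<forall>j. p 1 j = 1 / real d"
    and v_update: "\<forall>t\<in>{1..T}. \<forall>j. v (Suc t) j
        = p t j * exp (- \<eta> * l t j) / (\<Sum>i<d. p t i * exp (- \<eta> * l t i))"
begin

lemma experts_nonempty: "{..<d} \<noteq> {}"
proof -
  have "0 \<in> {..<d}" using d_pos by simp
  then show ?thesis by blast
qed

lemma v_update_simplex:
  assumes t: "t \<in> {1..T}" and p: "pos_simplex d (p t)"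
  shows "pos_simplex d (v (Suc t))"
proof -
  define S where "S = (\<Sum>i<d. p t i * exp (- \<eta> * l t i))"
  have S_pos: "0 < S"
    unfolding S_def using p experts_nonempty unfolding pos_simplex_def by (intro sum_pos) auto
  have v: "v (Suc t) j = p t j * exp (- \<eta> * l t j) / S" for j
    using v_update t unfolding S_def by auto
  have "(\<Sum>j<d. v (Suc t) j) = S / S"
    unfolding v by (simp add: sum_divide_distrib[symmetric] S_def)
  then show ?thesis
    using p S_pos unfolding pos_simplex_def v by simp
qed

lemma round_regret:
  assumes t: "t \<in> {1..T}" and p: "pos_simplex d (p t)" and u: "prob_simplex d u"
  shows "(\<Sum>j<d. p t j * l t j) - (\<Sum>j<d. u j * l t j)
       \<le> (\<Sum>j<d. u j * (ln (v (Suc t) j) - ln (p t j))) / \<eta> + \<eta> / 8"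
proof -
  define S where "S = (\<Sum>i<d. p t i * exp (- \<eta> * l t i))"
  define P where "P = (\<Sum>j<d. p t j * l t j)"
  define U where "U = (\<Sum>j<d. u j * l t j)"
  have S_pos: "0 < S"
    unfolding S_def using p experts_nonempty unfolding pos_simplex_def by (intro sum_pos) auto
  have log_change: "ln (v (Suc t) j) - ln (p t j) = - \<eta> * l t j - ln S" if j: "j < d" for j
  proof -
    have p_pos: "0 < p t j" using p j unfolding pos_simplex_def by simp
    have "v (Suc t) j = p t j * exp (- \<eta> * l t j) / S" using v_update t unfolding S_def by auto
    then show ?thesis using p_pos S_pos by (simp add: ln_div ln_mult)
  qed
  have "(\<Sum>j<d. u j * (ln (v (Suc t) j) - ln (p t j))) = (\<Sum>j<d. - \<eta> * (u j * l t j) - u j * ln S)"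
    by (intro sum.cong refl, subst log_change) (auto simp: algebra_simps)
  also have "\<dots> = - \<eta> * U - ln S"
    using u unfolding U_def prob_simplex_def
    by (simp add: sum_subtractf sum_negf sum_distrib_left[symmetric] sum_distrib_right[symmetric])
  finally have average: "(\<Sum>j<d. u j * (ln (v (Suc t) j) - ln (p t j))) = - \<eta> * U - ln S" .
  have hoeffding: "ln S \<le> - \<eta> * P + \<eta>\<^sup>2 / 8"
    unfolding S_def P_def using p loss_bounded t eta_pos
    by (intro ln_mixture_exp_le) (auto simp: pos_simplex_def less_imp_le)
  have "P - U - \<eta> / 8 = (\<eta> * P - \<eta> * U - \<eta>\<^sup>2 / 8) / \<eta>"
    using eta_pos by (simp add: field_simps power2_eq_square)
  also have "\<dots> \<le> (- \<eta> * U - ln S) / \<eta>"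
    using hoeffding eta_pos by (intro divide_right_mono) auto
  finally show ?thesis unfolding average P_def U_def by simp
qed

end

locale max_share_run = share_run +
  fixes \<alpha> :: real
  assumes alpha_pos: "0 < \<alpha>" and alpha_lt_one: "\<alpha> < 1"
    and p_mix: "\<forall>t\<in>{2..T}. \<forall>j. p t j = (1 - \<alpha>) * v t j
        + \<alpha> * Max ((\<lambda>s. v s j) ` {1..t}) / (\<Sum>i<d. Max ((\<lambda>s. v s i) ` {1..t}))"
begin

definition W :: "nat \<Rightarrow> nat \<Rightarrow> real" where
  "W t j = Max ((\<lambda>s. v s j) ` {1..t})"

definition Z :: "nat \<Rightarrow> real" where
  "Z t = (\<Sum>i<d. W t i)"

lemma p_mix_W: "t \<in> {2..T} \<Longrightarrow> p t j = (1 - \<alpha>) * v t j + \<alpha> * W t j / Z t"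
  using p_mix unfolding W_def Z_def by auto

lemma v_le_W: "s \<in> {1..t} \<Longrightarrow> v s j \<le> W t j"
  unfolding W_def by (intro Max_ge) auto

lemma W_mono: "1 \<le> t \<Longrightarrow> t \<le> t' \<Longrightarrow> W t j \<le> W t' j"
  unfolding W_def by (intro Max_mono) auto

lemma W_first: "W 1 j = 1 / real d"
  unfolding W_def using v_init by simp

lemma W_pos: "1 \<le> t \<Longrightarrow> 0 < W t j"
  using v_le_W[of 1 t j] v_init d_pos by (auto intro: less_le_trans[rotated])

lemma Z_pos: "1 \<le> t \<Longrightarrow> 0 < Z t"
  unfolding Z_def using W_pos experts_nonempty by (intro sum_pos) auto

lemma p_mix_simplex:
  assumes t: "t \<in> {2..T}" and v: "pos_simplex d (v t)"
  shows "pos_simplex d (p t)"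
proof -
  have t1: "1 \<le> t" using t by simp
  have "0 < p t j" if "j < d" for j
    using p_mix_W[OF t] v that alpha_lt_one alpha_pos W_pos[OF t1] Z_pos[OF t1]
    unfolding pos_simplex_def by (auto intro!: add_pos_pos mult_pos_pos divide_pos_pos)
  moreover have "(\<Sum>j<d. p t j) = (1 - \<alpha>) * (\<Sum>j<d. v t j) + \<alpha> / Z t * Z t"
    unfolding p_mix_W[OF t] Z_def by (simp add: sum.distrib sum_distrib_left)
  ultimately show ?thesis
    using v Z_pos[OF t1] unfolding pos_simplex_def by simp
qed

lemma simplex_invariant:
  assumes "1 \<le> t" "t \<le> T"
  shows "pos_simplex d (v t) \<and> pos_simplex d (p t)"
  using assms
proof (induction t rule: nat_induct_at_least)
  case base
  have "(\<Sum>j<d. 1 / real d) = 1" using d_pos by simp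
  then show ?case using v_init p_init d_pos unfolding pos_simplex_def by simp
next
  case (Suc t)
  then have "pos_simplex d (v (Suc t))" using v_update_simplex[of t] by simp
  then show ?case using p_mix_simplex[of "Suc t"] Suc.hyps Suc.prems by simp
qed

lemma p_simplex: "t \<in> {1..T} \<Longrightarrow> pos_simplex d (p t)"
  using simplex_invariant by auto

lemma v_simplex: "t \<in> {1..Suc T} \<Longrightarrow> pos_simplex d (v t)"
  using simplex_invariant v_update_simplex[OF _ p_simplex, of T] T_pos
  by (cases "t = Suc T") (auto simp: le_Suc_eq)

lemma W_le_one:
  assumes "t \<in> {1..Suc T}" "j < d"
  shows "W t j \<le> 1"
proof -
  have "v s j \<le> 1" if "s \<in> {1..t}" for s
    using pos_simplex_le_one[OF v_simplex] that assms by auto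
  then show ?thesis unfolding W_def using assms by (subst Max_le_iff) auto
qed

text \<open>The normaliser is at most t, since each maximum is bounded by the sum of the maximised
  pre-weights, and these sum to one in every round.\<close>

lemma Z_le: assumes t: "t \<in> {1..Suc T}" shows "Z t \<le> real t"
proof -
  have v_nonneg: "0 \<le> v s i" if "s \<in> {1..t}" "i < d" for s i
    using v_simplex[of s] that t unfolding pos_simplex_def by (auto simp: less_imp_le)
  have "Z t \<le> (\<Sum>i<d. \<Sum>s\<in>{1..t}. v s i)"
    unfolding Z_def W_def using v_nonneg t
    by (intro sum_mono) (auto simp: Max_le_iff intro!: member_le_sum)
  also have "\<dots> = (\<Sum>s\<in>{1..t}. \<Sum>i<d. v s i)" by (rule sum.swap)
  also have "\<dots> = (\<Sum>s\<in>{1..t}. 1)"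
    using t v_simplex unfolding pos_simplex_def by (intro sum.cong) auto
  finally show ?thesis by simp
qed

context
  fixes q :: "nat \<Rightarrow> nat \<Rightarrow> real"
  assumes comparator: "\<forall>t\<in>{1..T}. prob_simplex d (q t)"
begin

lemma q_bounds: "t \<in> {1..T} \<Longrightarrow> j < d \<Longrightarrow> 0 \<le> q t j \<and> q t j \<le> 1"
  using comparator unfolding prob_simplex_def by auto

lemma mixing_step:
  assumes t: "t \<in> {2..T}" and j: "j < d"
  shows "q (t - 1) j * ln (v t j) - q t j * ln (p t j)
       \<le> min (q (t - 1) j) (q t j) * ln (1 / (1 - \<alpha>))
         + max (q t j - q (t - 1) j) 0 * ln (real T / \<alpha>)
         + (q t j - q (t - 1) j) * - ln (W t j)"
proof -
  have t1: "1 \<le> t" and prev: "t - 1 \<in> {1..T}" using t by auto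
  have v_pos: "0 < v t j" using v_simplex[of t] t j unfolding pos_simplex_def by auto
  have W_pos': "0 < W t j" and Z_pos': "0 < Z t" using W_pos Z_pos t1 by auto
  have Z_le_T: "Z t \<le> real T" using Z_le[of t] t by auto
  have ln_y: "ln (1 / (\<alpha> * W t j / Z t)) \<le> ln (real T / \<alpha>) - ln (W t j)"
  proof -
    have "ln (1 / (\<alpha> * W t j / Z t)) = ln (Z t) - ln \<alpha> - ln (W t j)"
      using alpha_pos W_pos' Z_pos' by (simp add: ln_div ln_mult)
    also have "\<dots> \<le> ln (real T) - ln \<alpha> - ln (W t j)" using Z_le_T Z_pos' by simp
    also have "\<dots> = ln (real T / \<alpha>) - ln (W t j)" using alpha_pos Z_pos' Z_le_T by (simp add: ln_div)
    finally show ?thesis .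
  qed
  have "q (t - 1) j * ln (v t j) - q t j * ln (p t j)
      \<le> min (q (t - 1) j) (q t j) * ln (v t j / ((1 - \<alpha>) * v t j))
        + max (q t j - q (t - 1) j) 0 * ln (1 / (\<alpha> * W t j / Z t))
        + max (q (t - 1) j - q t j) 0 * ln (W t j)"
    unfolding p_mix_W[OF t] using q_bounds[of t j] q_bounds[OF prev j] t j v_pos W_pos' Z_pos'
      alpha_pos alpha_lt_one v_le_W[of t t j]
    by (intro ln_mixture_split) auto
  also have "\<dots> \<le> min (q (t - 1) j) (q t j) * ln (1 / (1 - \<alpha>))
        + max (q t j - q (t - 1) j) 0 * (ln (real T / \<alpha>) - ln (W t j))
        + max (q (t - 1) j - q t j) 0 * ln (W t j)"
    using ln_y v_pos by (auto intro!: mult_left_mono)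
  also have "\<dots> = min (q (t - 1) j) (q t j) * ln (1 / (1 - \<alpha>))
         + max (q t j - q (t - 1) j) 0 * ln (real T / \<alpha>)
         + (q t j - q (t - 1) j) * - ln (W t j)"
    by (cases "q (t - 1) j \<le> q t j") (simp_all add: max_def algebra_simps)
  finally show ?thesis .
qed

text \<open>The running-maximum potential telescopes to at most (max_t q_t) ln d, since w_j increases
  from 1/d to at most 1.\<close>

lemma potential_bound:
  assumes j: "j < d"
  shows "q 1 j * - ln (W 1 j) + (\<Sum>t=2..T. (q t j - q (t - 1) j) * - ln (W t j))
           - q T j * - ln (W (Suc T) j)
       \<le> Max ((\<lambda>t. q t j) ` {1..T}) * ln (real d)"
proof -
  define M where "M = Max ((\<lambda>t. q t j) ` {1..T})"
  have q_le_M: "\<forall>t\<in>{1..T}. q t j \<le> M"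
    unfolding M_def by (auto intro: Max_ge)
  have "q 1 j \<le> M" using q_le_M T_pos by auto
  then have M_nonneg: "0 \<le> M" using q_bounds[of 1 j] T_pos j by auto
  have potential_decr: "\<forall>t\<in>{1..T}. - ln (W (Suc t) j) \<le> - ln (W t j)"
    using W_mono[of _ "Suc _" j] W_pos by auto
  have "q 1 j * - ln (W 1 j) + (\<Sum>t=2..T. (q t j - q (t - 1) j) * - ln (W t j))
           - q T j * - ln (W (Suc T) j)
      = (\<Sum>t=1..T. q t j * (- ln (W t j) - - ln (W (Suc t) j)))"
    using sum_by_parts[OF T_pos, of "\<lambda>t. q t j" "\<lambda>t. - ln (W t j)"] by simp
  also have "\<dots> \<le> M * (- ln (W 1 j) - - ln (W (Suc T) j))"
    using q_le_M potential_decr by (rule weighted_telescope_le)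
  also have "\<dots> \<le> M * ln (real d)"
  proof -
    have "- ln (W 1 j) = ln (real d)" unfolding W_first using d_pos by (simp add: ln_div)
    moreover have "0 \<le> - ln (W (Suc T) j)" using W_le_one[of "Suc T" j] W_pos[of "Suc T" j] j by simp
    ultimately show ?thesis using M_nonneg by (intro mult_left_mono) auto
  qed
  finally show ?thesis unfolding M_def .
qed

lemma expert_log_change:
  assumes j: "j < d"
  shows "(\<Sum>t=1..T. q t j * (ln (v (Suc t) j) - ln (p t j)))
       \<le> (\<Sum>t=2..T. min (q (t - 1) j) (q t j) * ln (1 / (1 - \<alpha>))
                    + max (q t j - q (t - 1) j) 0 * ln (real T / \<alpha>))
         + Max ((\<lambda>t. q t j) ` {1..T}) * ln (real d)"
proof -
  have first: "- (q 1 j * ln (p 1 j)) = q 1 j * - ln (W 1 j)"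
    unfolding W_first using p_init by simp
  have last: "q T j * ln (v (Suc T) j) \<le> - (q T j * - ln (W (Suc T) j))"
    using v_le_W[of "Suc T" "Suc T" j] v_simplex[of "Suc T"] q_bounds[of T j] T_pos j
    unfolding pos_simplex_def by (auto intro!: mult_left_mono)
  have middle: "(\<Sum>t=2..T. q (t - 1) j * ln (v t j) - q t j * ln (p t j))
      \<le> (\<Sum>t=2..T. min (q (t - 1) j) (q t j) * ln (1 / (1 - \<alpha>))
                    + max (q t j - q (t - 1) j) 0 * ln (real T / \<alpha>))
        + (\<Sum>t=2..T. (q t j - q (t - 1) j) * - ln (W t j))"
    unfolding sum.distrib[symmetric] using mixing_step[OF _ j] by (intro sum_mono) auto
  have "(\<Sum>t=1..T. q t j * (ln (v (Suc t) j) - ln (p t j)))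
      = (\<Sum>t=1..T. q (Suc t - 1) j * ln (v (Suc t) j) - q t j * ln (p t j))"
    by (simp add: algebra_simps)
  also have "\<dots> = (\<Sum>t=2..T. q (t - 1) j * ln (v t j) - q t j * ln (p t j))
      + q T j * ln (v (Suc T) j) - q 1 j * ln (p 1 j)"
    using sum_shifted_diff[OF T_pos, of "\<lambda>t. q (t - 1) j * ln (v t j)" "\<lambda>t. q t j * ln (p t j)"]
    by simp
  also have "\<dots> \<le> (\<Sum>t=2..T. min (q (t - 1) j) (q t j) * ln (1 / (1 - \<alpha>))
                    + max (q t j - q (t - 1) j) 0 * ln (real T / \<alpha>))
      + (q 1 j * - ln (W 1 j) + (\<Sum>t=2..T. (q t j - q (t - 1) j) * - ln (W t j))
           - q T j * - ln (W (Suc T) j))"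
    using first last middle by linarith
  also have "\<dots> \<le> (\<Sum>t=2..T. min (q (t - 1) j) (q t j) * ln (1 / (1 - \<alpha>))
                    + max (q t j - q (t - 1) j) 0 * ln (real T / \<alpha>))
         + Max ((\<lambda>t. q t j) ` {1..T}) * ln (real d)"
    using potential_bound[OF j] by simp
  finally show ?thesis .
qed

lemma shift_cost:
  assumes t: "t \<in> {2..T}"
  shows "(\<Sum>j<d. min (q (t - 1) j) (q t j)) * c + (\<Sum>j<d. max (q t j - q (t - 1) j) 0) * c'
       = (1 - D_TV d (q t) (q (t - 1))) * c + D_TV d (q t) (q (t - 1)) * c'"
proof -
  have "(\<Sum>j<d. min (q (t - 1) j) (q t j)) = (\<Sum>j<d. q t j - max (q t j - q (t - 1) j) 0)"
    by (intro sum.cong) auto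
  also have "\<dots> = 1 - D_TV d (q t) (q (t - 1))"
    using t comparator unfolding D_TV_eq_sum_pos_part prob_simplex_def by (simp add: sum_subtractf)
  finally have kept: "(\<Sum>j<d. min (q (t - 1) j) (q t j)) = 1 - D_TV d (q t) (q (t - 1))" .
  show ?thesis unfolding kept D_TV_eq_sum_pos_part ..
qed

lemma total_log_change:
  "(\<Sum>t=1..T. \<Sum>j<d. q t j * (ln (v (Suc t) j) - ln (p t j)))
     \<le> n_max d T q * ln (real d) + m_shift d T q * ln (real T / \<alpha>)
       + (real T - 1 - m_shift d T q) * ln (1 / (1 - \<alpha>))"
proof -
  have "(\<Sum>t=1..T. \<Sum>j<d. q t j * (ln (v (Suc t) j) - ln (p t j)))
      = (\<Sum>j<d. \<Sum>t=1..T. q t j * (ln (v (Suc t) j) - ln (p t j)))"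
    by (rule sum.swap)
  also have "\<dots> \<le> (\<Sum>j<d. (\<Sum>t=2..T. min (q (t - 1) j) (q t j) * ln (1 / (1 - \<alpha>))
                    + max (q t j - q (t - 1) j) 0 * ln (real T / \<alpha>))
         + Max ((\<lambda>t. q t j) ` {1..T}) * ln (real d))"
    using expert_log_change by (intro sum_mono) auto
  also have "\<dots> = (\<Sum>t=2..T. (\<Sum>j<d. min (q (t - 1) j) (q t j)) * ln (1 / (1 - \<alpha>))
                    + (\<Sum>j<d. max (q t j - q (t - 1) j) 0) * ln (real T / \<alpha>))
         + n_max d T q * ln (real d)"
    unfolding sum.distrib n_max_def sum_distrib_right by (simp add: sum.swap[of _ "{2..T}"])
  also have "\<dots> = (\<Sum>t=2..T. (1 - D_TV d (q t) (q (t - 1))) * ln (1 / (1 - \<alpha>))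
                    + D_TV d (q t) (q (t - 1)) * ln (real T / \<alpha>))
         + n_max d T q * ln (real d)"
    by (rule arg_cong2[where f = "(+)"], rule sum.cong[OF refl shift_cost]) simp_all
  also have "\<dots> = n_max d T q * ln (real d) + m_shift d T q * ln (real T / \<alpha>)
       + (real (T - 1) - m_shift d T q) * ln (1 / (1 - \<alpha>))"
    unfolding m_shift_def by (simp add: sum.distrib sum_subtractf sum_distrib_right left_diff_distrib)
  finally show ?thesis using T_pos by (simp add: of_nat_diff algebra_simps)
qed

lemma regret_bound:
  "(\<Sum>t=1..T. \<Sum>j<d. p t j * l t j) - (\<Sum>t=1..T. \<Sum>j<d. q t j * l t j)
     \<le> n_max d T q * ln (real d) / \<eta> + \<eta> / 8 * real T
       + m_shift d T q / \<eta> * ln (real T / \<alpha>)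
       + (real T - m_shift d T q - 1) / \<eta> * ln (1 / (1 - \<alpha>))"
proof -
  have "(\<Sum>t=1..T. \<Sum>j<d. p t j * l t j) - (\<Sum>t=1..T. \<Sum>j<d. q t j * l t j)
      = (\<Sum>t=1..T. (\<Sum>j<d. p t j * l t j) - (\<Sum>j<d. q t j * l t j))"
    by (simp add: sum_subtractf)
  also have "\<dots> \<le> (\<Sum>t=1..T. (\<Sum>j<d. q t j * (ln (v (Suc t) j) - ln (p t j))) / \<eta> + \<eta> / 8)"
    using round_regret p_simplex comparator by (intro sum_mono) auto
  also have "\<dots> = (\<Sum>t=1..T. \<Sum>j<d. q t j * (ln (v (Suc t) j) - ln (p t j))) / \<eta> + \<eta> / 8 * real T"
    by (simp add: sum.distrib sum_divide_distrib)
  also have "\<dots> \<le> (n_max d T q * ln (real d) + m_shift d T q * ln (real T / \<alpha>)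
       + (real T - 1 - m_shift d T q) * ln (1 / (1 - \<alpha>))) / \<eta> + \<eta> / 8 * real T"
    using total_log_change eta_pos by (simp add: divide_right_mono)
  finally show ?thesis by (simp add: add_divide_distrib diff_divide_distrib algebra_simps)
qed

end

end

section \<open>The concrete algorithm\<close>

lemma gs_state_fst_Suc:
  "fst (gs_state d \<eta> psi l (Suc k)) = (fst (gs_state d \<eta> psi l k))(Suc (Suc k) :=
     (\<lambda>j. snd (gs_state d \<eta> psi l k) j * exp (- \<eta> * l (Suc k) j)
        / (\<Sum>i<d. snd (gs_state d \<eta> psi l k) i * exp (- \<eta> * l (Suc k) i))))"
  by (cases "gs_state d \<eta> psi l k") (simp add: Let_def)

lemma gs_state_snd_Suc:
  "snd (gs_state d \<eta> psi l (Suc k)) = psi (Suc (Suc k)) (fst (gs_state d \<eta> psi l (Suc k)))"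
  by (cases "gs_state d \<eta> psi l k") (simp add: Let_def)

lemma gs_state_fst_stable:
  "k \<le> k' \<Longrightarrow> s \<le> Suc k \<Longrightarrow> fst (gs_state d \<eta> psi l k') s = fst (gs_state d \<eta> psi l k) s"
proof (induction k' rule: dec_induct)
  case (step k')
  then show ?case by (simp add: gs_state_fst_Suc del: gs_state.simps(2))
qed simp

lemma gs_state_weights_update:
  assumes "1 \<le> t" "t \<le> K"
  shows "fst (gs_state d \<eta> psi l K) (Suc t)
       = (\<lambda>j. gs_pred d \<eta> psi l t j * exp (- \<eta> * l t j)
            / (\<Sum>i<d. gs_pred d \<eta> psi l t i * exp (- \<eta> * l t i)))"
proof -
  obtain k where k: "t = Suc k" using assms(1) by (cases t) auto
  have "fst (gs_state d \<eta> psi l K) (Suc t) = fst (gs_state d \<eta> psi l (Suc k)) (Suc (Suc k))"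
    using gs_state_fst_stable[of "Suc k" K "Suc t"] assms k by simp
  then show ?thesis unfolding gs_state_fst_Suc k gs_pred_def by simp
qed

lemma gs_pred_mixing:
  assumes "2 \<le> t"
  shows "gs_pred d \<eta> psi l t = psi t (fst (gs_state d \<eta> psi l (t - 1)))"
proof -
  obtain k where k: "t = Suc (Suc k)" using assms by (cases t; cases "t - 1") auto
  show ?thesis unfolding gs_pred_def k by (simp add: gs_state_snd_Suc del: gs_state.simps(2))
qed

lemma share_max_mix_cong:
  assumes "1 \<le> t" "\<forall>s\<in>{1..t}. V s = V' s"
  shows "share_max_mix d \<alpha> t V = share_max_mix d \<alpha> t V'"
proof -
  have "(\<lambda>s. V s i) ` {1..t} = (\<lambda>s. V' s i) ` {1..t}" for i
    using assms(2) by (intro image_cong) auto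
  moreover have "V t = V' t" using assms by auto
  ultimately show ?thesis unfolding share_max_mix_def by simp
qed

lemma gs_state_max_share_run:
  assumes "1 \<le> d" "1 \<le> T" "0 < \<eta>" "0 < \<alpha>" "\<alpha> < 1"
    and "\<forall>t\<in>{1..T}. \<forall>j<d. 0 \<le> l t j \<and> l t j \<le> 1"
  shows "max_share_run d T \<eta> l (gs_pred d \<eta> (share_max_mix d \<alpha>) l)
           (fst (gs_state d \<eta> (share_max_mix d \<alpha>) l T)) \<alpha>"
proof -
  define S where "S = gs_state d \<eta> (share_max_mix d \<alpha>) l"
  define v where "v = fst (S T)"
  have v_stable: "fst (S k) s = v s" if "k \<le> T" "s \<le> Suc k" for s k
    unfolding v_def S_def using gs_state_fst_stable that by metis
  have mixing: "gs_pred d \<eta> (share_max_mix d \<alpha>) l t = share_max_mix d \<alpha> t v" if "t \<in> {2..T}" for t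
    using that v_stable[of "t - 1"] unfolding S_def
    by (auto simp: gs_pred_mixing intro!: share_max_mix_cong)
  show ?thesis
    unfolding S_def[symmetric] v_def[symmetric]
  proof unfold_locales
    show "\<forall>j. v 1 j = 1 / real d" using v_stable[of 0 1, symmetric] by (simp add: S_def)
  next
    show "\<forall>t\<in>{1..T}. \<forall>j. v (Suc t) j = gs_pred d \<eta> (share_max_mix d \<alpha>) l t j * exp (- \<eta> * l t j)
        / (\<Sum>i<d. gs_pred d \<eta> (share_max_mix d \<alpha>) l t i * exp (- \<eta> * l t i))"
      unfolding v_def S_def using gs_state_weights_update by simp
  next
    show "\<forall>t\<in>{2..T}. \<forall>j. gs_pred d \<eta> (share_max_mix d \<alpha>) l t j = (1 - \<alpha>) * v t j
        + \<alpha> * Max ((\<lambda>s. v s j) ` {1..t}) / (\<Sum>i<d. Max ((\<lambda>s. v s i) ` {1..t}))"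
      using mixing by (simp add: share_max_mix_def)
  qed (use assms in \<open>auto simp: gs_pred_def\<close>)
qed

theorem mainTheorem10:
  fixes d T :: nat and \<eta> \<alpha> :: real and l q :: "nat \<Rightarrow> nat \<Rightarrow> real"
  assumes "d \<ge> 1" and "\<eta> > 0" and "0 < \<alpha>" and "\<alpha> < 1" and "T \<ge> 1"
    and "\<forall>t\<in>{1..T}. \<forall>j<d. 0 \<le> l t j \<and> l t j \<le> 1"
    and "\<forall>t\<in>{1..T}. prob_simplex d (q t)"
  shows "(\<Sum>t=1..T. \<Sum>j<d. gs_pred d \<eta> (share_max_mix d \<alpha>) l t j * l t j)
           - (\<Sum>t=1..T. \<Sum>j<d. q t j * l t j)
         \<le> n_max d T q * ln (real d) / \<eta> + \<eta> / 8 * real T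
           + m_shift d T q / \<eta> * ln (real T / \<alpha>)
           + (real T - m_shift d T q - 1) / \<eta> * ln (1 / (1 - \<alpha>))"
proof -
  interpret max_share_run d T \<eta> l "gs_pred d \<eta> (share_max_mix d \<alpha>) l"
      "fst (gs_state d \<eta> (share_max_mix d \<alpha>) l T)" \<alpha>
    using gs_state_max_share_run assms by blast
  show ?thesis using regret_bound assms(7) .
qed

end
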